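(* Consider the single-authority continuum model described in the context with utility $\xi(\bar s_h,x)$, where $\xi$ is monotone, differentiable and concave. Then the state-dependent APM $$A_m(y,s,\omega)\equiv h^{-1}\left(h(s)+\frac{\xi_{x_m}(\bar s_h(y,\omega),y)}{\xi_{\bar s_h}(\bar s_h(y,\omega),y)}\right)$$ implements a first-best optimal allocation, where $\bar s_h(y,\omega)$ is the score index in state $\omega$ when the highest-scoring $y=\{y_m\}_{m\in\mathcal M}$ agents of each group are allocated the resource, and $\xi_{x_m}$, $\xi_{\bar s_h}$ denote partial derivatives of $\xi$.
   Context: An authority allocates a resource of measure $q\in(0,1)$ to agents with types $(s,m)\in[0,1]\times\mathcal M$ ($\mathcal M$ finite). States $\omega$ are type distributions with densities $f_\omega$. Allocations are measurable $\mu:\Theta\to\{0,1\}$ allocating measure at most $q$. $h:[0,1]\to\mathbb R_+$ continuous strictly increasing; $\bar s_h(\mu,\omega)=\int\mu h\,dF_\omega$; $x_m(\mu,\omega)=\int_0^1\mu(s,m)f_\omega(s,m)ds$. A first-best optimal allocation is one maximizing $\xi(\bar s_h(\mu,\omega),x(\mu,\omega))$ in every state. A state-dependent APM $\hat A=\{\hat A_m\}$, $\hat A_m:\mathbb R^{|\mathcal M|}\times[0,1]\times\Omega\to\mathbb R$, implements $\mu$ in state $\omega$ if (1) $\mu(\theta)=1$ iff for all $\theta'$ with $\mu(\theta')=0$, $\hat A_{m(\theta)}(x(\mu,\omega),s(\theta),\omega)>\hat A_{m(\theta')}(x(\mu,\omega),s(\theta'),\omega)$, and (2) $\sum_mx_m(\mu,\omega)=q$.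 *)

theory Defs
  imports "HOL-Analysis.Analysis"
begin

text \<open>Types are pairs (s,m) with s in [0,1] and m in a finite type 'm.
A state is represented by its density f :: 'm => real => real (f m s = f_omega(s,m)).
An allocation is mu :: 'm => real => bool (mu m s = True iff type (s,m) gets the resource).\<close>

definition is_state :: "('m::finite \<Rightarrow> real \<Rightarrow> real) \<Rightarrow> bool" where
  "is_state f \<longleftrightarrow>
     (\<forall>m. set_integrable lebesgue {0..1} (f m)) \<and>
     (\<forall>m s. s \<in> {0..1} \<longrightarrow> 0 \<le> f m s) \<and>
     (\<Sum>m\<in>UNIV. (LINT s:{0..1}|lebesgue. f m s)) = 1"

definition xalloc :: "('m::finite \<Rightarrow> real \<Rightarrow> real) \<Rightarrow> ('m \<Rightarrow> real \<Rightarrow> bool) \<Rightarrow> real^'m" where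
  "xalloc f \<mu> = (\<chi> m. (LINT s:{0..1}|lebesgue. (if \<mu> m s then f m s else 0)))"

definition sbar :: "(real \<Rightarrow> real) \<Rightarrow> ('m::finite \<Rightarrow> real \<Rightarrow> real) \<Rightarrow> ('m \<Rightarrow> real \<Rightarrow> bool) \<Rightarrow> real" where
  "sbar h f \<mu> = (\<Sum>m\<in>UNIV. (LINT s:{0..1}|lebesgue. (if \<mu> m s then h s * f m s else 0)))"

definition allocation :: "real \<Rightarrow> ('m::finite \<Rightarrow> real \<Rightarrow> real) \<Rightarrow> ('m \<Rightarrow> real \<Rightarrow> bool) \<Rightarrow> bool" where
  "allocation q f \<mu> \<longleftrightarrow>
     (\<forall>m. {s \<in> {0..1}. \<mu> m s} \<in> sets lebesgue) \<and> (\<Sum>m\<in>UNIV. xalloc f \<mu> $ m) \<le> q"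

definition first_best ::
  "(real \<times> (real^'m) \<Rightarrow> real) \<Rightarrow> (real \<Rightarrow> real) \<Rightarrow> real \<Rightarrow> ('m::finite \<Rightarrow> real \<Rightarrow> real)
     \<Rightarrow> ('m \<Rightarrow> real \<Rightarrow> bool) \<Rightarrow> bool" where
  "first_best \<xi> h q f \<mu> \<longleftrightarrow> allocation q f \<mu> \<and>
     (\<forall>\<mu>'. allocation q f \<mu>' \<longrightarrow> \<xi> (sbar h f \<mu>', xalloc f \<mu>') \<le> \<xi> (sbar h f \<mu>, xalloc f \<mu>))"

text \<open>Score index when the highest-scoring y_m agents of each group m are allocated.\<close>
definition sbar_top :: "(real \<Rightarrow> real) \<Rightarrow> ('m::finite \<Rightarrow> real \<Rightarrow> real) \<Rightarrow> real^'m \<Rightarrow> real" where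
  "sbar_top h f y = (\<Sum>m\<in>UNIV. (THE v. \<exists>t\<in>{0..1}.
       (LINT s:{t..1}|lebesgue. f m s) = y $ m \<and> v = (LINT s:{t..1}|lebesgue. h s * f m s)))"

definition partial_s :: "(real \<times> (real^'m::finite) \<Rightarrow> real) \<Rightarrow> real \<times> (real^'m) \<Rightarrow> real" where
  "partial_s \<xi> p = frechet_derivative \<xi> (at p) (1, 0)"

definition partial_x :: "(real \<times> (real^'m::finite) \<Rightarrow> real) \<Rightarrow> 'm \<Rightarrow> real \<times> (real^'m) \<Rightarrow> real" where
  "partial_x \<xi> m p = frechet_derivative \<xi> (at p) (0, axis m 1)"

text \<open>The APM of the proposition in state f; g plays the role of h^{-1}.\<close>
definition APM :: "(real \<Rightarrow> real) \<Rightarrow> (real \<Rightarrow> real) \<Rightarrow> (real \<times> (real^'m::finite) \<Rightarrow> real)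
     \<Rightarrow> ('m \<Rightarrow> real \<Rightarrow> real) \<Rightarrow> 'm \<Rightarrow> real^'m \<Rightarrow> real \<Rightarrow> real" where
  "APM g h \<xi> f m y s =
     g (h s + partial_x \<xi> m (sbar_top h f y, y) / partial_s \<xi> (sbar_top h f y, y))"

definition implements :: "real \<Rightarrow> ('m::finite \<Rightarrow> real^'m \<Rightarrow> real \<Rightarrow> real)
     \<Rightarrow> ('m \<Rightarrow> real \<Rightarrow> real) \<Rightarrow> ('m \<Rightarrow> real \<Rightarrow> bool) \<Rightarrow> bool" where
  "implements q A f \<mu> \<longleftrightarrow>
     (\<forall>m s. s \<in> {0..1} \<longrightarrow>
        (\<mu> m s \<longleftrightarrow> (\<forall>m' s'. s' \<in> {0..1} \<and> \<not> \<mu> m' s' \<longrightarrow>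
              A m (xalloc f \<mu>) s > A m' (xalloc f \<mu>) s'))) \<and>
     (\<Sum>m\<in>UNIV. xalloc f \<mu> $ m) = q"

end

(*
  Relax allocations to fractional ones, w : [0,1] -> [0,1] for each group. By the bathtub
  principle any fractional allocation is dominated by upper tails {s >= t_m} of the same
  masses, and the budget-feasible threshold vectors t form a compact set, so some t_opt
  maximises xi; its outcome p_opt dominates every fractional allocation. Since the fractional
  allocations are convex, differentiating xi at p_opt along segments gives a first-order
  condition: with c_m = xi_{x_m} / xi_{s} at p_opt and the marginal value v_m(s) = h(s) + c_m,
  no feasible shift of mass raises the integral of v against the density. Shifting mass from
  just above one threshold to just below another shows that the values of admitted types
  dominate those of rejected ones, and, as v > 0 away from s = 0, that the budget binds.
  Hence a cutoff lambda exists such that {v > lambda} differs from the optimal tails only on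
  null sets; it is first-best, and the APM h^-1(h + c) = h^-1 o v ranks its admitted types
  strictly above its rejected ones.
*)

theory Submission
  imports Defs
begin

section \<open>Weighted integrals on the unit interval\<close>

definition weighted_integral :: "(real \<Rightarrow> real) \<Rightarrow> (real \<Rightarrow> real) \<Rightarrow> real" where
  "weighted_integral g w = (LINT s:{0..1}|lebesgue. w s * g s)"

definition bounded_weight :: "(real \<Rightarrow> real) \<Rightarrow> bool" where
  "bounded_weight w \<longleftrightarrow> w \<in> borel_measurable (lebesgue_on {0..1}) \<and> bounded (w ` {0..1})"

lemma bounded_weight_integrable:
  assumes "set_integrable lebesgue {0..1} g" "bounded_weight w"
  shows "set_integrable lebesgue {0..1} (\<lambda>s. w s * g s)"
  using assms absolutely_integrable_bounded_measurable_product_real[of w "{0..1}" g]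
  unfolding bounded_weight_def by auto

lemma bounded_weight_continuous: "continuous_on {0..1} w \<Longrightarrow> bounded_weight w"
  unfolding bounded_weight_def
  by (simp add: continuous_imp_measurable_on_sets_lebesgue compact_continuous_image compact_imp_bounded)

lemma bounded_weight_indicator: "S \<in> sets lebesgue \<Longrightarrow> bounded_weight (indicator S)"
  unfolding bounded_weight_def bounded_iff
  by (auto intro!: measurable_restrict_space1 exI[of _ 1] split: split_indicator)

lemma bounded_weight_indicator_interval [simp]:
  "bounded_weight (indicator {a..})" "bounded_weight (indicator {a<..})" "bounded_weight (indicator {a..<b})"
  by (simp_all add: bounded_weight_indicator)

lemma bounded_weight_lincomb:
  assumes "bounded_weight w1" "bounded_weight w2"
  shows "bounded_weight (\<lambda>s. a * w1 s + b * w2 s)"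
proof -
  obtain B1 B2 where B: "\<forall>s\<in>{0..1}. \<bar>w1 s\<bar> \<le> B1" "\<forall>s\<in>{0..1}. \<bar>w2 s\<bar> \<le> B2"
    using assms unfolding bounded_weight_def bounded_iff by auto
  have "\<forall>s\<in>{0..1}. \<bar>a * w1 s + b * w2 s\<bar> \<le> \<bar>a\<bar> * B1 + \<bar>b\<bar> * B2"
  proof
    fix s :: real assume s: "s \<in> {0..1}"
    have "\<bar>a * w1 s + b * w2 s\<bar> \<le> \<bar>a\<bar> * \<bar>w1 s\<bar> + \<bar>b\<bar> * \<bar>w2 s\<bar>"
      by (metis abs_mult abs_triangle_ineq)
    also have "\<dots> \<le> \<bar>a\<bar> * B1 + \<bar>b\<bar> * B2"
      using B s by (intro add_mono mult_left_mono) auto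
    finally show "\<bar>a * w1 s + b * w2 s\<bar> \<le> \<bar>a\<bar> * B1 + \<bar>b\<bar> * B2" .
  qed
  moreover have "(\<lambda>s. a * w1 s + b * w2 s) \<in> borel_measurable (lebesgue_on {0..1})"
    using assms unfolding bounded_weight_def by (intro borel_measurable_add borel_measurable_times) auto
  ultimately show ?thesis
    unfolding bounded_weight_def bounded_iff by auto
qed

lemma weighted_integral_cong:
  "(\<And>s. s \<in> {0..1} \<Longrightarrow> w1 s * g1 s = w2 s * g2 s) \<Longrightarrow> weighted_integral g1 w1 = weighted_integral g2 w2"
  unfolding weighted_integral_def by (rule set_lebesgue_integral_cong) auto

lemma weighted_integral_lincomb:
  assumes "set_integrable lebesgue {0..1} g" "bounded_weight w1" "bounded_weight w2"
  shows "weighted_integral g (\<lambda>s. a * w1 s + b * w2 s) = a * weighted_integral g w1 + b * weighted_integral g w2"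
proof -
  have "set_integrable lebesgue {0..1} (\<lambda>s. a * (w1 s * g s))"
    "set_integrable lebesgue {0..1} (\<lambda>s. b * (w2 s * g s))"
    using assms bounded_weight_integrable by auto
  then show ?thesis
    unfolding weighted_integral_def by (simp add: algebra_simps)
qed

lemma weighted_integral_add_scaled:
  assumes "set_integrable lebesgue {0..1} g" "bounded_weight w1" "bounded_weight w2"
  shows "weighted_integral g (\<lambda>s. w1 s + e * w2 s) = weighted_integral g w1 + e * weighted_integral g w2"
  using weighted_integral_lincomb[OF assms, of 1 e] by simp

lemma weighted_integral_scale_density:
  "weighted_integral (\<lambda>s. k * g s) w = k * weighted_integral g w"
proof -
  have "(\<lambda>s. w s * (k * g s)) = (\<lambda>s. k * (w s * g s))"
    by (simp add: algebra_simps)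
  then show ?thesis
    unfolding weighted_integral_def by simp
qed

lemma weighted_integral_le:
  assumes "set_integrable lebesgue {0..1} g1" "set_integrable lebesgue {0..1} g2"
    and "bounded_weight w1" "bounded_weight w2"
    and "\<And>s. s \<in> {0..1} \<Longrightarrow> w1 s * g1 s \<le> w2 s * g2 s"
  shows "weighted_integral g1 w1 \<le> weighted_integral g2 w2"
  unfolding weighted_integral_def using assms
  by (intro set_integral_mono bounded_weight_integrable) auto

lemma weighted_integral_mono:
  assumes "set_integrable lebesgue {0..1} g" "\<And>s. s \<in> {0..1} \<Longrightarrow> 0 \<le> g s"
    and "bounded_weight w1" "bounded_weight w2" "\<And>s. s \<in> {0..1} \<Longrightarrow> w1 s \<le> w2 s"
  shows "weighted_integral g w1 \<le> weighted_integral g w2"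
  using assms by (intro weighted_integral_le) (auto intro: mult_right_mono)

lemma weighted_integral_nonneg:
  assumes "set_integrable lebesgue {0..1} g" "\<And>s. s \<in> {0..1} \<Longrightarrow> 0 \<le> g s"
    and "bounded_weight w" "\<And>s. s \<in> {0..1} \<Longrightarrow> 0 \<le> w s"
  shows "0 \<le> weighted_integral g w"
  using weighted_integral_mono[OF assms(1,2) bounded_weight_continuous[OF continuous_on_const] assms(3), of 0]
    assms(4) by (simp add: weighted_integral_def)

lemma weighted_integral_atLeast:
  assumes "set_integrable lebesgue {0..1} g" "t \<in> {0..1}"
  shows "weighted_integral g (indicator {t..}) = (LINT s:{t..1}|lebesgue. g s)"
    and "weighted_integral g (indicator {t..}) = integral {t..1} g"
proof -
  show *: "weighted_integral g (indicator {t..}) = (LINT s:{t..1}|lebesgue. g s)"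
    unfolding weighted_integral_def set_lebesgue_integral_def
    by (rule Bochner_Integration.integral_cong) (use assms(2) in \<open>auto split: split_indicator\<close>)
  have "set_integrable lebesgue {t..1} g"
    by (rule set_integrable_subset[OF assms(1)]) (use assms(2) in auto)
  then show "weighted_integral g (indicator {t..}) = integral {t..1} g"
    using * set_lebesgue_integral_eq_integral(2) by simp
qed

lemma continuous_on_weighted_integral_atLeast:
  assumes "set_integrable lebesgue {0..1} g"
  shows "continuous_on {0..1} (\<lambda>t. weighted_integral g (indicator {t..}))"
proof -
  have "continuous_on {0..1} (\<lambda>t. integral {t..1} g)"
    using set_lebesgue_integral_eq_integral(1)[OF assms] by (rule indefinite_integral_continuous_1')
  then show ?thesis
    by (rule continuous_on_eq) (use weighted_integral_atLeast(2)[OF assms] in auto)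
qed

lemma weighted_integral_greaterThan:
  assumes "set_integrable lebesgue {0..1} g"
  shows "weighted_integral g (indicator {u<..}) = weighted_integral g (indicator {u..})"
  unfolding weighted_integral_def set_lebesgue_integral_def
proof (rule integral_cong_AE)
  show "(\<lambda>x. indicator {0..1} x *\<^sub>R (indicator {u<..} x * g x)) \<in> borel_measurable lebesgue"
    "(\<lambda>x. indicator {0..1} x *\<^sub>R (indicator {u..} x * g x)) \<in> borel_measurable lebesgue"
    using bounded_weight_integrable[OF assms] unfolding set_integrable_def
    by (auto intro: borel_measurable_integrable)
  have "AE x in lebesgue. x \<noteq> u"
    by (simp add: AE_completion AE_lborel_singleton)
  then show "AE x in lebesgue. indicator {0..1} x *\<^sub>R (indicator {u<..} x * g x) =
      indicator {0..1} x *\<^sub>R (indicator {u..} x * g x)"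
    by eventually_elim (auto split: split_indicator)
qed

lemma weighted_integral_atLeastLessThan:
  assumes "set_integrable lebesgue {0..1} g" "a \<le> b"
  shows "weighted_integral g (indicator {a..<b}) =
    weighted_integral g (indicator {a..}) - weighted_integral g (indicator {b..})"
proof -
  have "weighted_integral g (indicator {a..}) = weighted_integral g (\<lambda>s. 1 * indicator {a..<b} s + 1 * indicator {b..} s)"
    using assms(2) by (intro weighted_integral_cong) (auto split: split_indicator)
  then show ?thesis
    using weighted_integral_lincomb[OF assms(1), of "indicator {a..<b}" "indicator {b..}" 1 1] by simp
qed

lemma exists_threshold_same_mass:
  assumes f: "set_integrable lebesgue {0..1} f" "\<And>s. s \<in> {0..1} \<Longrightarrow> 0 \<le> f s"
    and w: "bounded_weight w" "\<And>s. s \<in> {0..1} \<Longrightarrow> 0 \<le> w s \<and> w s \<le> 1"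
  obtains t where "t \<in> {0..1}" "weighted_integral f (indicator {t..}) = weighted_integral f w"
proof -
  define F where "F t = weighted_integral f (indicator {t..})" for t
  have "F 1 = 0"
    unfolding F_def using weighted_integral_atLeast(2)[OF f(1), of 1] by simp
  moreover have "weighted_integral f w \<le> F 0"
    unfolding F_def using w by (intro weighted_integral_mono[OF f]) auto
  moreover have "0 \<le> weighted_integral f w"
    using w by (intro weighted_integral_nonneg[OF f]) auto
  moreover have "continuous_on {0..1} F"
    unfolding F_def using continuous_on_weighted_integral_atLeast[OF f(1)] .
  ultimately show ?thesis
    using IVT2'[of F 1 "weighted_integral f w" 0] that unfolding F_def by auto
qed

text \<open>Bathtub principle: an upper tail of the same mass has at least the score, because
  \<open>(indicator {t..} - w) (h - h t) f \<ge> 0\<close> pointwise.\<close>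

lemma threshold_rearrangement:
  fixes f h w :: "real \<Rightarrow> real"
  assumes f: "set_integrable lebesgue {0..1} f" "\<And>s. s \<in> {0..1} \<Longrightarrow> 0 \<le> f s"
    and h: "continuous_on {0..1} h" "mono_on {0..1} h"
    and w: "bounded_weight w" "\<And>s. s \<in> {0..1} \<Longrightarrow> 0 \<le> w s \<and> w s \<le> 1"
  shows "\<exists>t\<in>{0..1}. weighted_integral f (indicator {t..}) = weighted_integral f w \<and>
           weighted_integral (\<lambda>s. h s * f s) w \<le> weighted_integral (\<lambda>s. h s * f s) (indicator {t..})"
proof -
  obtain t where t: "t \<in> {0..1}" "weighted_integral f (indicator {t..}) = weighted_integral f w"
    using exists_threshold_same_mass[OF f w] .
  have hf: "set_integrable lebesgue {0..1} (\<lambda>s. h s * f s)"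
    using bounded_weight_integrable[OF f(1) bounded_weight_continuous[OF h(1)]] .
  have key: "(h t * indicator {t..} s + (- h t) * w s) * f s \<le>
      (1 * indicator {t..} s + (-1) * w s) * (h s * f s)" if s: "s \<in> {0..1}" for s
  proof -
    have "0 \<le> (indicator {t..} s - w s) * (h s - h t) * f s"
    proof (cases "t \<le> s")
      case True
      then have "h t \<le> h s" using h(2) s t(1) by (auto intro: mono_onD)
      then show ?thesis using True w(2) f(2) s by (auto intro!: mult_nonneg_nonneg)
    next
      case False
      then have "h s \<le> h t" using h(2) s t(1) by (auto intro: mono_onD)
      then have "0 \<le> w s * (h t - h s) * f s" using w(2) f(2) s by (auto intro!: mult_nonneg_nonneg)
      then show ?thesis using False by (simp add: algebra_simps)
    qed
    then show ?thesis by (simp add: algebra_simps)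
  qed
  have "weighted_integral f (\<lambda>s. h t * indicator {t..} s + (- h t) * w s) \<le>
        weighted_integral (\<lambda>s. h s * f s) (\<lambda>s. 1 * indicator {t..} s + (-1) * w s)"
    using key by (intro weighted_integral_le[OF f(1) hf] bounded_weight_lincomb w(1)) auto
  moreover have "weighted_integral f (\<lambda>s. h t * indicator {t..} s + (- h t) * w s) = 0"
    using weighted_integral_lincomb[OF f(1) _ w(1), of "indicator {t..}" "h t" "- h t"] t(2) by simp
  moreover have "weighted_integral (\<lambda>s. h s * f s) (\<lambda>s. 1 * indicator {t..} s + (-1) * w s) =
      weighted_integral (\<lambda>s. h s * f s) (indicator {t..}) - weighted_integral (\<lambda>s. h s * f s) w"
    using weighted_integral_lincomb[OF hf _ w(1), of "indicator {t..}" 1 "-1"] by simp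
  ultimately show ?thesis
    using t by (intro bexI[of _ t]) auto
qed

lemma weighted_integral_sandwich:
  assumes g: "set_integrable lebesgue {0..1} g" "\<And>s. s \<in> {0..1} \<Longrightarrow> 0 \<le> g s"
    and k: "bounded_weight k" "\<And>s. s \<in> {0..1} \<Longrightarrow> 0 \<le> k s \<and> k s \<le> B"
    and w: "bounded_weight w1" "bounded_weight w" "bounded_weight w2"
    and le: "\<And>s. s \<in> {0..1} \<Longrightarrow> w1 s \<le> w s \<and> w s \<le> w2 s"
    and eq: "weighted_integral g w1 = weighted_integral g w2"
  shows "weighted_integral g w = weighted_integral g w1"
    and "weighted_integral (\<lambda>s. k s * g s) w = weighted_integral (\<lambda>s. k s * g s) w1"
proof -
  show "weighted_integral g w = weighted_integral g w1"
  proof -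
    have "weighted_integral g w1 \<le> weighted_integral g w"
      using le by (intro weighted_integral_mono[OF g w(1,2)]) auto
    moreover have "weighted_integral g w \<le> weighted_integral g w2"
      using le by (intro weighted_integral_mono[OF g w(2,3)]) auto
    ultimately show ?thesis using eq by simp
  qed
  have kg: "set_integrable lebesgue {0..1} (\<lambda>s. k s * g s)"
    using bounded_weight_integrable[OF g(1) k(1)] .
  have "weighted_integral (\<lambda>s. k s * g s) w1 \<le> weighted_integral (\<lambda>s. k s * g s) w"
    using k(2) g(2) le by (intro weighted_integral_mono[OF kg _ w(1,2)]) auto
  moreover have "weighted_integral (\<lambda>s. k s * g s) (\<lambda>s. 1 * w s + (-1) * w1 s) \<le>
        weighted_integral g (\<lambda>s. B * w2 s + (- B) * w1 s)"
  proof (intro weighted_integral_le[OF kg g(1)] bounded_weight_lincomb w)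
    fix s :: real assume s: "s \<in> {0..1}"
    have "(w s - w1 s) * (k s * g s) \<le> (w2 s - w1 s) * (B * g s)"
      using le[OF s] k(2)[OF s] g(2)[OF s] by (intro mult_mono mult_right_mono) auto
    then show "(1 * w s + - 1 * w1 s) * (k s * g s) \<le> (B * w2 s + - B * w1 s) * g s"
      by (simp add: algebra_simps)
  qed
  moreover have "weighted_integral (\<lambda>s. k s * g s) (\<lambda>s. 1 * w s + (-1) * w1 s) =
      weighted_integral (\<lambda>s. k s * g s) w - weighted_integral (\<lambda>s. k s * g s) w1"
    using weighted_integral_lincomb[OF kg w(2,1), of 1 "-1"] by simp
  moreover have "weighted_integral g (\<lambda>s. B * w2 s + (- B) * w1 s) = 0"
    using weighted_integral_lincomb[OF g(1) w(3,1), of B "- B"] eq by simp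
  ultimately show "weighted_integral (\<lambda>s. k s * g s) w = weighted_integral (\<lambda>s. k s * g s) w1"
    by simp
qed

lemma has_derivative_direction_nonpos:
  fixes \<xi> :: "'a::real_normed_vector \<Rightarrow> real"
  assumes der: "(\<xi> has_derivative D) (at p)"
    and le: "\<And>e. 0 < e \<Longrightarrow> e \<le> 1 \<Longrightarrow> \<xi> (p + e *\<^sub>R d) \<le> \<xi> p"
  shows "D d \<le> 0"
proof (rule ccontr)
  assume "\<not> D d \<le> 0"
  have "((\<lambda>e::real. p + e *\<^sub>R d) has_derivative (\<lambda>e. e *\<^sub>R d)) (at 0)"
    by (auto intro!: derivative_eq_intros)
  moreover have "(\<xi> has_derivative D) (at ((\<lambda>e::real. p + e *\<^sub>R d) 0))"
    using der by simp
  ultimately have "((\<lambda>e. \<xi> (p + e *\<^sub>R d)) has_derivative (\<lambda>e. D (e *\<^sub>R d))) (at 0)"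
    by (rule has_derivative_compose)
  moreover have "(\<lambda>e. D (e *\<^sub>R d)) = (*) (D d)"
    using linear_scale[OF has_derivative_linear[OF der]] by (auto simp: mult.commute)
  ultimately have "DERIV (\<lambda>e. \<xi> (p + e *\<^sub>R d)) 0 :> D d"
    by (simp add: has_field_derivative_def)
  from DERIV_pos_inc_right[OF this] \<open>\<not> D d \<le> 0\<close> obtain \<delta> where "\<delta> > 0"
    and inc: "\<And>e. 0 < e \<Longrightarrow> e < \<delta> \<Longrightarrow> \<xi> p < \<xi> (p + e *\<^sub>R d)"
    by fastforce
  define e where "e = min (\<delta>/2) 1"
  have "0 < e" "e < \<delta>" "e \<le> 1"
    using \<open>\<delta> > 0\<close> unfolding e_def by (auto simp: min_less_iff_disj)
  then have "\<xi> p < \<xi> (p + e *\<^sub>R d)" "\<xi> (p + e *\<^sub>R d) \<le> \<xi> p"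
    using inc le by auto
  then show False by simp
qed

lemma linear_Pair_vec_expansion:
  fixes D :: "real \<times> (real^'m::finite) \<Rightarrow> real"
  assumes "linear D"
  shows "D (a, x) = a * D (1, 0) + (\<Sum>m\<in>UNIV. x $ m * D (0, axis m 1))"
proof -
  have "(a, x) = a *\<^sub>R (1, 0) + (\<Sum>m\<in>UNIV. x $ m *\<^sub>R (0, axis m 1))"
    by (simp add: prod_eq_iff fst_sum snd_sum scalar_mult_eq_scaleR[symmetric] basis_expansion)
  then have "D (a, x) = D (a *\<^sub>R (1, 0)) + D (\<Sum>m\<in>UNIV. x $ m *\<^sub>R (0, axis m 1))"
    by (metis linear_add[OF assms])
  then show ?thesis
    by (simp only: linear_scale[OF assms] linear_sum[OF assms] o_def real_scaleR_def)
qed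

section \<open>Fractional allocations and optimal thresholds\<close>

definition fractional_allocation ::
    "real \<Rightarrow> ('m::finite \<Rightarrow> real \<Rightarrow> real) \<Rightarrow> ('m \<Rightarrow> real \<Rightarrow> real) \<Rightarrow> bool" where
  "fractional_allocation q f P \<longleftrightarrow>
     (\<forall>m. bounded_weight (P m)) \<and> (\<forall>m. \<forall>s\<in>{0..1}. 0 \<le> P m s \<and> P m s \<le> 1) \<and>
     (\<Sum>m\<in>UNIV. weighted_integral (f m) (P m)) \<le> q"

definition outcome ::
    "(real \<Rightarrow> real) \<Rightarrow> ('m::finite \<Rightarrow> real \<Rightarrow> real) \<Rightarrow> ('m \<Rightarrow> real \<Rightarrow> real) \<Rightarrow> real \<times> (real^'m)" where
  "outcome h f P =
     (\<Sum>m\<in>UNIV. weighted_integral (\<lambda>s. h s * f m s) (P m), \<chi> m. weighted_integral (f m) (P m))"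

lemma xalloc_eq_weighted_integral:
  "xalloc f \<mu> $ m = weighted_integral (f m) (indicator {s \<in> {0..1}. \<mu> m s})"
  unfolding xalloc_def weighted_integral_def
  by (auto intro!: set_lebesgue_integral_cong split: split_indicator)

lemma sbar_eq_weighted_integral:
  "sbar h f \<mu> = (\<Sum>m\<in>UNIV. weighted_integral (\<lambda>s. h s * f m s) (indicator {s \<in> {0..1}. \<mu> m s}))"
  unfolding sbar_def weighted_integral_def
  by (auto intro!: sum.cong set_lebesgue_integral_cong split: split_indicator)

lemma outcome_eq_sbar_xalloc:
  "outcome h f (\<lambda>m. indicator {s \<in> {0..1}. \<mu> m s}) = (sbar h f \<mu>, xalloc f \<mu>)"
  unfolding outcome_def sbar_eq_weighted_integral by (simp add: vec_eq_iff xalloc_eq_weighted_integral)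

lemma fractional_allocation_of_allocation:
  "allocation q f \<mu> \<Longrightarrow> fractional_allocation q f (\<lambda>m. indicator {s \<in> {0..1}. \<mu> m s})"
  unfolding allocation_def fractional_allocation_def xalloc_eq_weighted_integral
  by (auto intro!: bounded_weight_indicator split: split_indicator)

locale continuum_state =
  fixes \<xi> :: "real \<times> (real^'m::finite) \<Rightarrow> real" and h :: "real \<Rightarrow> real" and q :: real
    and f :: "'m \<Rightarrow> real \<Rightarrow> real"
  assumes q: "0 < q" "q < 1"
    and h_cont: "continuous_on {0..1} h" and h_strict_mono: "strict_mono_on {0..1} h"
    and h_nonneg: "\<forall>s\<in>{0..1}. 0 \<le> h s"
    and \<xi>_mono: "\<forall>a a' x x'. a \<le> a' \<and> (\<forall>m. x $ m \<le> x' $ m) \<longrightarrow> \<xi> (a, x) \<le> \<xi> (a', x')"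
    and \<xi>_differentiable: "\<forall>p. \<xi> differentiable (at p)"
    and partial_s_pos: "\<forall>p. partial_s \<xi> p > 0"
    and state: "is_state f"
begin

lemma f_integrable: "set_integrable lebesgue {0..1} (f m)"
  using state unfolding is_state_def by auto

lemma f_nonneg: "s \<in> {0..1} \<Longrightarrow> 0 \<le> f m s"
  using state unfolding is_state_def by auto

lemma h_bounded_weight: "bounded_weight h"
  using bounded_weight_continuous[OF h_cont] .

lemma hf_integrable: "set_integrable lebesgue {0..1} (\<lambda>s. h s * f m s)"
  using bounded_weight_integrable[OF f_integrable h_bounded_weight] .

lemma h_le: "s \<in> {0..1} \<Longrightarrow> t \<in> {0..1} \<Longrightarrow> s \<le> t \<Longrightarrow> h s \<le> h t"
  using h_strict_mono by (auto simp: strict_mono_on_less_eq)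

lemma h_less: "s \<in> {0..1} \<Longrightarrow> t \<in> {0..1} \<Longrightarrow> s < t \<Longrightarrow> h s < h t"
  using h_strict_mono by (auto simp: strict_mono_on_def)

definition upper_mass :: "'m \<Rightarrow> real \<Rightarrow> real" where
  "upper_mass m t = weighted_integral (f m) (indicator {t..})"

definition upper_score :: "'m \<Rightarrow> real \<Rightarrow> real" where
  "upper_score m t = weighted_integral (\<lambda>s. h s * f m s) (indicator {t..})"

lemma continuous_on_upper_mass: "continuous_on {0..1} (upper_mass m)"
  unfolding upper_mass_def[abs_def] by (rule continuous_on_weighted_integral_atLeast[OF f_integrable])

lemma continuous_on_upper_score: "continuous_on {0..1} (upper_score m)"
  unfolding upper_score_def[abs_def] by (rule continuous_on_weighted_integral_atLeast[OF hf_integrable])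

lemma upper_mass_antimono: "s \<le> t \<Longrightarrow> upper_mass m t \<le> upper_mass m s"
  unfolding upper_mass_def
  by (rule weighted_integral_mono[OF f_integrable f_nonneg]) (auto split: split_indicator)

lemma upper_mass_one: "upper_mass m 1 = 0"
  using weighted_integral_atLeast(2)[OF f_integrable, of 1] unfolding upper_mass_def by simp

lemma outcome_upper_tails:
  "outcome h f (\<lambda>m. indicator {t $ m..}) = (\<Sum>m\<in>UNIV. upper_score m (t $ m), \<chi> m. upper_mass m (t $ m))"
  unfolding outcome_def upper_score_def upper_mass_def ..

definition feasible_thresholds :: "(real^'m) set" where
  "feasible_thresholds = cbox 0 1 \<inter> (\<lambda>t. \<Sum>m\<in>UNIV. upper_mass m (t $ m)) -` {..q}"

lemma feasible_thresholds_iff: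
  "t \<in> feasible_thresholds \<longleftrightarrow> (\<forall>m. t $ m \<in> {0..1}) \<and> (\<Sum>m\<in>UNIV. upper_mass m (t $ m)) \<le> q"
  unfolding feasible_thresholds_def by (auto simp: mem_box_cart)

lemma continuous_on_component:
  assumes "continuous_on {0..1} \<phi>"
  shows "continuous_on (cbox 0 1) (\<lambda>t::real^'m. \<phi> (t $ m))"
proof (rule continuous_on_compose2[OF assms])
  show "continuous_on (cbox 0 1) (\<lambda>t::real^'m. t $ m)"
    by (intro continuous_intros)
  show "(\<lambda>t::real^'m. t $ m) ` cbox 0 1 \<subseteq> {0..1}"
    by (auto simp: mem_box_cart)
qed

lemma compact_feasible_thresholds: "compact feasible_thresholds"
proof -
  have "closed feasible_thresholds"
    unfolding feasible_thresholds_def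
    by (rule continuous_closed_preimage) (auto intro!: continuous_on_sum continuous_on_component continuous_on_upper_mass)
  then have "compact (cbox 0 1 \<inter> feasible_thresholds)"
    by (intro compact_Int_closed) auto
  then show ?thesis
    by (simp add: feasible_thresholds_def Int_absorb1)
qed

lemma one_in_feasible_thresholds: "1 \<in> feasible_thresholds"
  using q by (simp add: feasible_thresholds_iff upper_mass_one)

definition threshold_value :: "real^'m \<Rightarrow> real" where
  "threshold_value t = \<xi> (outcome h f (\<lambda>m. indicator {t $ m..}))"

lemma continuous_on_threshold_value: "continuous_on feasible_thresholds threshold_value"
proof -
  have "continuous_on UNIV \<xi>"
    using \<xi>_differentiable by (intro continuous_at_imp_continuous_on) (auto intro: differentiable_imp_continuous_within)
  then have "continuous_on (cbox 0 1) threshold_value"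
    unfolding threshold_value_def[abs_def] outcome_upper_tails
    by (rule continuous_on_compose2)
       (auto intro!: continuous_on_Pair continuous_on_sum continuous_on_vec_lambda continuous_on_component
         continuous_on_upper_mass continuous_on_upper_score)
  then show ?thesis
    by (rule continuous_on_subset) (auto simp: feasible_thresholds_def)
qed

definition t_opt :: "real^'m" where
  "t_opt = (SOME t. t \<in> feasible_thresholds \<and> (\<forall>t'\<in>feasible_thresholds. threshold_value t' \<le> threshold_value t))"

definition p_opt :: "real \<times> (real^'m)" where
  "p_opt = outcome h f (\<lambda>m. indicator {t_opt $ m..})"

lemma t_opt_feasible: "t_opt \<in> feasible_thresholds"
  and threshold_outcome_le_p_opt: "t \<in> feasible_thresholds \<Longrightarrow> \<xi> (outcome h f (\<lambda>m. indicator {t $ m..})) \<le> \<xi> p_opt"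
proof -
  have "\<exists>t. t \<in> feasible_thresholds \<and> (\<forall>t'\<in>feasible_thresholds. threshold_value t' \<le> threshold_value t)"
    using continuous_attains_sup[OF compact_feasible_thresholds _ continuous_on_threshold_value]
      one_in_feasible_thresholds by auto
  from someI_ex[OF this, folded t_opt_def]
  show "t_opt \<in> feasible_thresholds"
    "t \<in> feasible_thresholds \<Longrightarrow> \<xi> (outcome h f (\<lambda>m. indicator {t $ m..})) \<le> \<xi> p_opt"
    unfolding p_opt_def threshold_value_def by blast+
qed

lemma t_opt_in_unit: "t_opt $ m \<in> {0..1}"
  and upper_mass_t_opt_le: "(\<Sum>m\<in>UNIV. upper_mass m (t_opt $ m)) \<le> q"
  using t_opt_feasible by (simp_all add: feasible_thresholds_iff)

lemma p_opt_eq: "p_opt = (\<Sum>m\<in>UNIV. upper_score m (t_opt $ m), \<chi> m. upper_mass m (t_opt $ m))"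
  unfolding p_opt_def outcome_upper_tails ..

lemma fractional_outcome_le_p_opt:
  assumes "fractional_allocation q f P"
  shows "\<xi> (outcome h f P) \<le> \<xi> p_opt"
proof -
  have "\<forall>m. \<exists>t\<in>{0..1}. upper_mass m t = weighted_integral (f m) (P m) \<and>
      weighted_integral (\<lambda>s. h s * f m s) (P m) \<le> upper_score m t"
    using assms threshold_rearrangement[OF f_integrable f_nonneg h_cont strict_mono_on_imp_mono_on[OF h_strict_mono]]
    unfolding fractional_allocation_def upper_mass_def upper_score_def by blast
  then obtain T where T: "\<And>m. T m \<in> {0..1}" "\<And>m. upper_mass m (T m) = weighted_integral (f m) (P m)"
      "\<And>m. weighted_integral (\<lambda>s. h s * f m s) (P m) \<le> upper_score m (T m)"
    by metis
  define t where "t = (\<chi> m. T m)"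
  have "t \<in> feasible_thresholds"
    using T assms unfolding fractional_allocation_def feasible_thresholds_iff t_def by auto
  moreover have "\<xi> (outcome h f P) \<le> \<xi> (outcome h f (\<lambda>m. indicator {t $ m..}))"
    unfolding outcome_upper_tails unfolding outcome_def t_def using T
    by (intro \<xi>_mono[rule_format] conjI sum_mono) auto
  ultimately show ?thesis
    using threshold_outcome_le_p_opt by fastforce
qed

section \<open>The first-order condition\<close>

lemma partial_x_nonneg: "0 \<le> partial_x \<xi> m p"
proof -
  define D where "D = frechet_derivative \<xi> (at p)"
  have "(\<xi> has_derivative D) (at p)"
    using \<xi>_differentiable frechet_derivative_works unfolding D_def by blast
  then have "((\<lambda>z. - \<xi> z) has_derivative (\<lambda>z. - D z)) (at p)"
    by (rule has_derivative_minus)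
  then have "- D (0, axis m 1) \<le> 0"
  proof (rule has_derivative_direction_nonpos)
    fix e :: real assume "0 < e"
    then have "\<xi> p \<le> \<xi> (p + e *\<^sub>R (0, axis m 1))"
      using \<xi>_mono by (cases p) (auto simp: axis_def)
    then show "- \<xi> (p + e *\<^sub>R (0, axis m 1)) \<le> - \<xi> p" by simp
  qed
  then show ?thesis
    unfolding partial_x_def D_def by simp
qed

text \<open>\<open>c m\<close> is the shadow price of group \<open>m\<close>'s share, in units of the score index, and
  \<open>v m s\<close> is the marginal value of allocating to type \<open>(s, m)\<close>; the APM is \<open>h\<^sup>-\<^sup>1 \<circ> v\<close>.\<close>

definition c :: "'m \<Rightarrow> real" where
  "c m = partial_x \<xi> m p_opt / partial_s \<xi> p_opt"

definition v :: "'m \<Rightarrow> real \<Rightarrow> real" where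
  "v m s = h s + c m"

lemma c_nonneg: "0 \<le> c m"
  unfolding c_def using partial_x_nonneg[of m p_opt] partial_s_pos[rule_format, of p_opt] by simp

lemma continuous_on_v: "continuous_on {0..1} (v m)"
  unfolding v_def[abs_def] using h_cont by (intro continuous_intros)

lemma vf_integrable: "set_integrable lebesgue {0..1} (\<lambda>s. v m s * f m s)"
  using bounded_weight_integrable[OF f_integrable bounded_weight_continuous[OF continuous_on_v]] .

lemma v_le: "s \<in> {0..1} \<Longrightarrow> t \<in> {0..1} \<Longrightarrow> s \<le> t \<Longrightarrow> v m s \<le> v m t"
  unfolding v_def using h_le by simp

lemma v_pos: "s \<in> {0<..1} \<Longrightarrow> 0 < v m s"
  using h_less[of 0 s] h_nonneg c_nonneg[of m] unfolding v_def by force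

lemma weighted_integral_v:
  assumes "bounded_weight w"
  shows "weighted_integral (\<lambda>s. v m s * f m s) w =
    weighted_integral (\<lambda>s. h s * f m s) w + c m * weighted_integral (f m) w"
proof -
  have "set_integrable lebesgue {0..1} (\<lambda>s. w s * (h s * f m s))"
      "set_integrable lebesgue {0..1} (\<lambda>s. c m * (w s * f m s))"
    using bounded_weight_integrable[OF hf_integrable assms] bounded_weight_integrable[OF f_integrable assms]
    by auto
  moreover have "weighted_integral (\<lambda>s. v m s * f m s) w =
      (LINT s:{0..1}|lebesgue. w s * (h s * f m s) + c m * (w s * f m s))"
    unfolding weighted_integral_def v_def by (simp add: algebra_simps)
  ultimately show ?thesis
    unfolding weighted_integral_def by simp
qed

lemma outcome_add_scaled:
  assumes "\<And>m. bounded_weight (P m)" "\<And>m. bounded_weight (\<delta> m)"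
  shows "outcome h f (\<lambda>m s. P m s + e * \<delta> m s) = outcome h f P + e *\<^sub>R outcome h f \<delta>"
  unfolding outcome_def
  by (simp add: weighted_integral_add_scaled[OF hf_integrable assms] weighted_integral_add_scaled[OF f_integrable assms]
    sum.distrib sum_distrib_left vec_eq_iff)

lemma fractional_allocation_t_opt: "fractional_allocation q f (\<lambda>m. indicator {t_opt $ m..})"
  using t_opt_feasible unfolding fractional_allocation_def feasible_thresholds_iff upper_mass_def
  by (auto split: split_indicator)

lemma fractional_allocation_segment:
  assumes P: "fractional_allocation q f P" and P\<delta>: "fractional_allocation q f (\<lambda>m s. P m s + \<delta> m s)"
    and \<delta>: "\<And>m. bounded_weight (\<delta> m)" and e: "0 \<le> e" "e \<le> 1"
  shows "fractional_allocation q f (\<lambda>m s. P m s + e * \<delta> m s)"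
  unfolding fractional_allocation_def
proof (intro conjI allI ballI)
  have bw: "bounded_weight (P m)" for m
    using P unfolding fractional_allocation_def by auto
  show "bounded_weight (\<lambda>s. P m s + e * \<delta> m s)" for m
    using bounded_weight_lincomb[OF bw \<delta>, where a = 1 and b = e] by simp
  fix m and s :: real assume "s \<in> {0..1}"
  then have "0 \<le> P m s" "P m s \<le> 1" "0 \<le> P m s + \<delta> m s" "P m s + \<delta> m s \<le> 1"
    using P P\<delta> unfolding fractional_allocation_def by auto
  moreover have "P m s + e * \<delta> m s = (1 - e) * P m s + e * (P m s + \<delta> m s)"
    by (simp add: algebra_simps)
  ultimately show "0 \<le> P m s + e * \<delta> m s" "P m s + e * \<delta> m s \<le> 1"
    using e by (auto intro!: convex_bound_le add_nonneg_nonneg mult_nonneg_nonneg)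
next
  have bw: "bounded_weight (P m)" for m
    using P unfolding fractional_allocation_def by auto
  let ?mass = "\<lambda>P. \<Sum>m\<in>UNIV. weighted_integral (f m) (P m)"
  have "?mass (\<lambda>m s. P m s + e * \<delta> m s) = (1 - e) * ?mass P + e * ?mass (\<lambda>m s. P m s + \<delta> m s)"
    using weighted_integral_add_scaled[OF f_integrable bw \<delta>, where e = e]
      weighted_integral_add_scaled[OF f_integrable bw \<delta>, where e = 1]
    by (simp add: sum.distrib sum_distrib_left sum_subtractf algebra_simps)
  also have "\<dots> \<le> (1 - e) * q + e * q"
    using P P\<delta> e unfolding fractional_allocation_def by (intro add_mono mult_left_mono) auto
  finally show "?mass (\<lambda>m s. P m s + e * \<delta> m s) \<le> q"
    by (simp add: algebra_simps)
qed

text \<open>Since \<open>p_opt\<close> dominates every fractional allocation, it dominates the segment from the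
  optimal tails towards any feasible perturbation of them.\<close>

lemma first_order_condition:
  assumes \<delta>: "\<And>m. bounded_weight (\<delta> m)"
    and feas: "fractional_allocation q f (\<lambda>m s. indicator {t_opt $ m..} s + \<delta> m s)"
  shows "(\<Sum>m\<in>UNIV. weighted_integral (\<lambda>s. v m s * f m s) (\<delta> m)) \<le> 0"
proof -
  define d where "d = outcome h f \<delta>"
  define D where "D = frechet_derivative \<xi> (at p_opt)"
  have D: "(\<xi> has_derivative D) (at p_opt)"
    using \<xi>_differentiable frechet_derivative_works unfolding D_def by blast
  have "D d \<le> 0"
  proof (rule has_derivative_direction_nonpos[OF D])
    fix e :: real assume "0 < e" "e \<le> 1"
    then have "fractional_allocation q f (\<lambda>m s. indicator {t_opt $ m..} s + e * \<delta> m s)"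
      using fractional_allocation_segment[OF fractional_allocation_t_opt feas \<delta>] by simp
    then have "\<xi> (outcome h f (\<lambda>m s. indicator {t_opt $ m..} s + e * \<delta> m s)) \<le> \<xi> p_opt"
      by (rule fractional_outcome_le_p_opt)
    moreover have "outcome h f (\<lambda>m s. indicator {t_opt $ m..} s + e * \<delta> m s) = p_opt + e *\<^sub>R d"
      using outcome_add_scaled[of "\<lambda>m. indicator {t_opt $ m..}" \<delta> e] \<delta>
      unfolding p_opt_def d_def by simp
    ultimately show "\<xi> (p_opt + e *\<^sub>R d) \<le> \<xi> p_opt"
      by simp
  qed
  moreover have "D d = partial_s \<xi> p_opt * fst d + (\<Sum>m\<in>UNIV. snd d $ m * partial_x \<xi> m p_opt)"
    using linear_Pair_vec_expansion[OF has_derivative_linear[OF D], of "fst d" "snd d"]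
    unfolding D_def partial_s_def partial_x_def by (simp add: mult.commute)
  moreover have "partial_x \<xi> m p_opt = partial_s \<xi> p_opt * c m" for m
    unfolding c_def using partial_s_pos[rule_format, of p_opt] by simp
  ultimately have "partial_s \<xi> p_opt * (fst d + (\<Sum>m\<in>UNIV. snd d $ m * c m)) \<le> 0"
    by (simp add: algebra_simps sum_distrib_left)
  then have "fst d + (\<Sum>m\<in>UNIV. snd d $ m * c m) \<le> 0"
    using partial_s_pos[rule_format, of p_opt] by (simp add: mult_le_0_iff)
  then show ?thesis
    unfolding weighted_integral_v[OF \<delta>] d_def outcome_def by (simp add: sum.distrib algebra_simps)
qed

text \<open>The perturbation admits the types in \<open>[a, b)\<close> of group \<open>m\<close> with weight \<open>\<alpha>\<close> and drops
  those in \<open>[a', b')\<close> of group \<open>m'\<close> with weight \<open>\<beta>\<close>.\<close>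

lemma shift_mass:
  assumes "b \<le> t_opt $ m" "t_opt $ m' \<le> a'" "0 \<le> \<alpha>" "\<alpha> \<le> 1" "0 \<le> \<beta>" "\<beta> \<le> 1"
    and budget: "(\<Sum>k\<in>UNIV. upper_mass k (t_opt $ k)) + \<alpha> * weighted_integral (f m) (indicator {a..<b})
      - \<beta> * weighted_integral (f m') (indicator {a'..<b'}) \<le> q"
  shows "\<alpha> * weighted_integral (\<lambda>s. v m s * f m s) (indicator {a..<b}) \<le>
    \<beta> * weighted_integral (\<lambda>s. v m' s * f m' s) (indicator {a'..<b'})"
proof -
  define A where "A k = (if k = m then \<alpha> else 0)" for k
  define B where "B k = (if k = m' then - \<beta> else 0)" for k
  define \<delta> where "\<delta> k s = A k * indicator {a..<b} s + B k * indicator {a'..<b'} s" for k s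
  have \<delta>: "bounded_weight (\<delta> k)" for k
    unfolding \<delta>_def by (rule bounded_weight_lincomb) simp_all
  have sum_A: "(\<Sum>k\<in>UNIV. A k * X k) = \<alpha> * X m" and sum_B: "(\<Sum>k\<in>UNIV. B k * X k) = - \<beta> * X m'"
    for X :: "'m \<Rightarrow> real"
    unfolding A_def B_def by (simp_all add: if_distrib[where f = "\<lambda>x. x * _"] cong: if_cong)
  have weighted_integral_\<delta>: "weighted_integral g (\<delta> k) =
      A k * weighted_integral g (indicator {a..<b}) + B k * weighted_integral g (indicator {a'..<b'})"
    if "set_integrable lebesgue {0..1} g" for g k
    unfolding \<delta>_def by (rule weighted_integral_lincomb[OF that]) simp_all
  have "fractional_allocation q f (\<lambda>k s. indicator {t_opt $ k..} s + \<delta> k s)"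
    unfolding fractional_allocation_def
  proof (intro conjI allI ballI)
    show "bounded_weight (\<lambda>s. indicator {t_opt $ k..} s + \<delta> k s)" for k
      using bounded_weight_lincomb[OF _ \<delta>, of "indicator {t_opt $ k..}" 1 1] by simp
    show "0 \<le> indicator {t_opt $ k..} s + \<delta> k s" "indicator {t_opt $ k..} s + \<delta> k s \<le> 1" for k s
      using assms(1-6) unfolding \<delta>_def A_def B_def by (auto split: split_indicator)
    have "weighted_integral (f k) (\<lambda>s. indicator {t_opt $ k..} s + \<delta> k s) =
        upper_mass k (t_opt $ k) + weighted_integral (f k) (\<delta> k)" for k
      using weighted_integral_add_scaled[OF f_integrable _ \<delta>, of "indicator {t_opt $ k..}" k 1]
      unfolding upper_mass_def by simp
    then show "(\<Sum>k\<in>UNIV. weighted_integral (f k) (\<lambda>s. indicator {t_opt $ k..} s + \<delta> k s)) \<le> q"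
      using budget by (simp add: weighted_integral_\<delta>[OF f_integrable] sum.distrib sum_A sum_B)
  qed
  from first_order_condition[OF \<delta> this]
  show ?thesis
    by (simp add: weighted_integral_\<delta>[OF vf_integrable] sum.distrib sum_A sum_B)
qed

section \<open>Marginal values at the optimal thresholds\<close>

text \<open>As \<open>f\<close> may vanish on intervals, \<open>t_opt $ m\<close> is only determined up to the interval
  \<open>[l m, u m]\<close> on which \<open>upper_mass m\<close> is constant.\<close>

definition level :: "'m \<Rightarrow> real set" where
  "level m = {s \<in> {0..1}. upper_mass m s = upper_mass m (t_opt $ m)}"

definition l :: "'m \<Rightarrow> real" where
  "l m = Inf (level m)"

definition u :: "'m \<Rightarrow> real" where
  "u m = Sup (level m)"

lemma l_u_in_level: "l m \<in> level m" "u m \<in> level m"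
  and l_le: "s \<in> level m \<Longrightarrow> l m \<le> s" and u_ge: "s \<in> level m \<Longrightarrow> s \<le> u m"
proof -
  have "level m \<noteq> {}"
    using t_opt_in_unit unfolding level_def by auto
  moreover have "closed (level m)"
    unfolding level_def by (rule continuous_closed_preimage_constant[OF continuous_on_upper_mass]) auto
  moreover have "bdd_below (level m)" "bdd_above (level m)"
    unfolding level_def by (auto intro!: bdd_belowI[of _ 0] bdd_aboveI[of _ 1])
  ultimately show "l m \<in> level m" "u m \<in> level m"
    unfolding l_def u_def by (auto intro: closed_contains_Inf closed_contains_Sup)
  show "s \<in> level m \<Longrightarrow> l m \<le> s" "s \<in> level m \<Longrightarrow> s \<le> u m"
    unfolding l_def u_def using \<open>bdd_below (level m)\<close> \<open>bdd_above (level m)\<close>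
    by (auto intro: cInf_lower cSup_upper)
qed

lemma l_in_unit: "l m \<in> {0..1}" and u_in_unit: "u m \<in> {0..1}"
  using l_u_in_level unfolding level_def by auto

lemma l_le_t_opt: "l m \<le> t_opt $ m" and t_opt_le_u: "t_opt $ m \<le> u m"
  using l_le u_ge t_opt_in_unit unfolding level_def by auto

lemma l_le_u: "l m \<le> u m"
  using l_le_t_opt t_opt_le_u by (rule order_trans)

lemma upper_mass_l: "upper_mass m (l m) = upper_mass m (t_opt $ m)"
  and upper_mass_u: "upper_mass m (u m) = upper_mass m (t_opt $ m)"
  using l_u_in_level unfolding level_def by auto

lemma upper_mass_eq_t_opt_iff:
  assumes "s \<in> {0..1}"
  shows "upper_mass m s = upper_mass m (t_opt $ m) \<longleftrightarrow> s \<in> {l m..u m}"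
proof
  assume "s \<in> {l m..u m}"
  then have "upper_mass m (u m) \<le> upper_mass m s" "upper_mass m s \<le> upper_mass m (l m)"
    by (auto intro: upper_mass_antimono)
  then show "upper_mass m s = upper_mass m (t_opt $ m)"
    using l_u_in_level unfolding level_def by auto
qed (use assms l_le u_ge in \<open>auto simp: level_def\<close>)

lemma mass_below_l_pos:
  assumes "a \<in> {0..<l m}"
  shows "0 < weighted_integral (f m) (indicator {a..<l m})"
proof -
  have "a \<in> {0..1}"
    using assms l_in_unit[of m] by auto
  then have "upper_mass m a \<noteq> upper_mass m (l m)"
    using upper_mass_eq_t_opt_iff[of a m] assms unfolding upper_mass_l by auto
  then have "upper_mass m (l m) < upper_mass m a"
    using upper_mass_antimono[of a "l m" m] assms by auto
  then show ?thesis
    using weighted_integral_atLeastLessThan[OF f_integrable, of a "l m"] assms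
    unfolding upper_mass_def by simp
qed

lemma mass_above_u_pos:
  assumes "b \<in> {u m<..1}"
  shows "0 < weighted_integral (f m) (indicator {u m..<b})"
proof -
  have "b \<in> {0..1}"
    using assms u_in_unit[of m] by auto
  then have "upper_mass m b \<noteq> upper_mass m (u m)"
    using upper_mass_eq_t_opt_iff[of b m] assms unfolding upper_mass_u by auto
  then have "upper_mass m b < upper_mass m (u m)"
    using upper_mass_antimono[of "u m" b m] assms by auto
  then show ?thesis
    using weighted_integral_atLeastLessThan[OF f_integrable, of "u m" b] assms
    unfolding upper_mass_def by simp
qed

lemma value_interval_ge:
  assumes "a \<in> {0..1}"
  shows "v m a * weighted_integral (f m) (indicator {a..<b}) \<le>
    weighted_integral (\<lambda>s. v m s * f m s) (indicator {a..<b})"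
proof -
  have "weighted_integral (\<lambda>s. v m a * f m s) (indicator {a..<b}) \<le>
      weighted_integral (\<lambda>s. v m s * f m s) (indicator {a..<b})"
    using assms v_le f_nonneg
    by (intro weighted_integral_le[OF set_integrable_mult_right[OF f_integrable] vf_integrable])
      (auto intro: mult_right_mono split: split_indicator)
  then show ?thesis
    by (simp add: weighted_integral_scale_density)
qed

lemma value_interval_le:
  assumes "b \<in> {0..1}"
  shows "weighted_integral (\<lambda>s. v m s * f m s) (indicator {a..<b}) \<le>
    v m b * weighted_integral (f m) (indicator {a..<b})"
proof -
  have "weighted_integral (\<lambda>s. v m s * f m s) (indicator {a..<b}) \<le>
      weighted_integral (\<lambda>s. v m b * f m s) (indicator {a..<b})"
    using assms v_le f_nonneg
    by (intro weighted_integral_le[OF vf_integrable set_integrable_mult_right[OF f_integrable]])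
      (auto intro: mult_right_mono split: split_indicator)
  then show ?thesis
    by (simp add: weighted_integral_scale_density)
qed

lemma v_below_l_le_v_above_u:
  assumes a: "a \<in> {0..<l m}" and b: "b \<in> {u m'<..1}"
  shows "v m a \<le> v m' b"
proof -
  define P where "P = weighted_integral (f m) (indicator {a..<l m})"
  define Q where "Q = weighted_integral (f m') (indicator {u m'..<b})"
  define \<rho> where "\<rho> = min P Q"
  have "0 < P" "0 < Q"
    unfolding P_def Q_def using mass_below_l_pos[OF a] mass_above_u_pos[OF b] .
  then have \<rho>: "0 < \<rho>" "\<rho> / P \<le> 1" "\<rho> / Q \<le> 1" "\<rho> / P * P = \<rho>" "\<rho> / Q * Q = \<rho>"
    unfolding \<rho>_def by auto
  have "\<rho> / P * weighted_integral (\<lambda>s. v m s * f m s) (indicator {a..<l m}) \<le>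
      \<rho> / Q * weighted_integral (\<lambda>s. v m' s * f m' s) (indicator {u m'..<b})"
    using \<rho> \<open>0 < P\<close> \<open>0 < Q\<close> l_le_t_opt t_opt_le_u upper_mass_t_opt_le
    by (intro shift_mass) (auto simp: P_def[symmetric] Q_def[symmetric])
  moreover have "\<rho> * v m a \<le> \<rho> / P * weighted_integral (\<lambda>s. v m s * f m s) (indicator {a..<l m})"
  proof -
    have "\<rho> / P * (v m a * P) \<le> \<rho> / P * weighted_integral (\<lambda>s. v m s * f m s) (indicator {a..<l m})"
      using value_interval_ge[of a m "l m"] a l_in_unit[of m] \<rho> \<open>0 < P\<close> unfolding P_def
      by (intro mult_left_mono) auto
    then show ?thesis
      using \<open>0 < P\<close> by simp
  qed
  moreover have "\<rho> / Q * weighted_integral (\<lambda>s. v m' s * f m' s) (indicator {u m'..<b}) \<le> \<rho> * v m' b"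
  proof -
    have "\<rho> / Q * weighted_integral (\<lambda>s. v m' s * f m' s) (indicator {u m'..<b}) \<le> \<rho> / Q * (v m' b * Q)"
      using value_interval_le[of b m' "u m'"] b u_in_unit[of m'] \<rho> \<open>0 < Q\<close> unfolding Q_def
      by (intro mult_left_mono) auto
    then show ?thesis
      using \<open>0 < Q\<close> by simp
  qed
  ultimately have "\<rho> * v m a \<le> \<rho> * v m' b"
    by linarith
  then show ?thesis
    using \<rho>(1) by simp
qed

lemma v_l_le_v_u:
  assumes "0 < l m" "u m' < 1"
  shows "v m (l m) \<le> v m' (u m')"
proof -
  have le_above: "v m (l m) \<le> v m' b" if b: "b \<in> {u m'<..1}" for b
  proof (rule continuous_le_on_closure[where S = "{0..<l m}" and f = "v m" and x = "l m"])
    show "continuous_on (closure {0..<l m}) (v m)"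
      using assms(1) l_in_unit[of m] by (auto intro: continuous_on_subset[OF continuous_on_v])
    show "l m \<in> closure {0..<l m}"
      using assms(1) by simp
  qed (rule v_below_l_le_v_above_u[OF _ b])
  show ?thesis
  proof (rule continuous_ge_on_closure[where S = "{u m'<..1}" and f = "v m'" and x = "u m'"])
    show "continuous_on (closure {u m'<..1}) (v m')"
      using assms(2) u_in_unit[of m'] by (auto intro: continuous_on_subset[OF continuous_on_v])
    show "u m' \<in> closure {u m'<..1}"
      using assms(2) by simp
  qed (rule le_above)
qed

lemma l_pos_if_slack:
  assumes "(\<Sum>m\<in>UNIV. upper_mass m (t_opt $ m)) < q"
  obtains m where "0 < l m"
proof -
  have "(\<Sum>m\<in>UNIV. upper_mass m 0) = 1"
    using state weighted_integral_atLeast(1)[OF f_integrable, of 0] unfolding is_state_def upper_mass_def by simp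
  then have "\<exists>m. upper_mass m (t_opt $ m) \<noteq> upper_mass m 0"
    using assms q by (auto intro: ccontr)
  then obtain m where "upper_mass m (t_opt $ m) \<noteq> upper_mass m 0" ..
  then have "0 < l m"
    using upper_mass_eq_t_opt_iff[of 0 m] l_in_unit[of m] l_le_u[of m] by force
  then show ?thesis ..
qed

lemma budget_binding: "(\<Sum>m\<in>UNIV. upper_mass m (t_opt $ m)) = q"
proof (rule ccontr)
  assume "(\<Sum>m\<in>UNIV. upper_mass m (t_opt $ m)) \<noteq> q"
  then have slack: "(\<Sum>m\<in>UNIV. upper_mass m (t_opt $ m)) < q"
    using upper_mass_t_opt_le by simp
  then obtain m where "0 < l m"
    by (rule l_pos_if_slack)
  define a where "a = l m / 2"
  have a: "a \<in> {0<..<l m}"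
    using \<open>0 < l m\<close> unfolding a_def by simp
  define P where "P = weighted_integral (f m) (indicator {a..<l m})"
  have "0 < P"
    unfolding P_def using mass_below_l_pos a by simp
  define \<alpha> where "\<alpha> = min 1 ((q - (\<Sum>m\<in>UNIV. upper_mass m (t_opt $ m))) / P)"
  have \<alpha>: "0 < \<alpha>" "\<alpha> \<le> 1"
    using \<open>0 < P\<close> slack unfolding \<alpha>_def by auto
  have "\<alpha> * P \<le> (q - (\<Sum>m\<in>UNIV. upper_mass m (t_opt $ m))) / P * P"
    using \<open>0 < P\<close> unfolding \<alpha>_def by (intro mult_right_mono) auto
  then have "\<alpha> * P \<le> q - (\<Sum>m\<in>UNIV. upper_mass m (t_opt $ m))"
    using \<open>0 < P\<close> by simp
  then have "\<alpha> * weighted_integral (\<lambda>s. v m s * f m s) (indicator {a..<l m}) \<le>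
      0 * weighted_integral (\<lambda>s. v m s * f m s) (indicator {t_opt $ m..<t_opt $ m})"
    using \<alpha> l_le_t_opt by (intro shift_mass) (auto simp: P_def[symmetric])
  moreover have "0 < \<alpha> * (v m a * P)"
    using \<alpha> \<open>0 < P\<close> v_pos[of a m] a l_in_unit[of m] by simp
  moreover have "\<alpha> * (v m a * P) \<le> \<alpha> * weighted_integral (\<lambda>s. v m s * f m s) (indicator {a..<l m})"
    using value_interval_ge[of a m "l m"] a l_in_unit[of m] \<alpha> unfolding P_def
    by (intro mult_left_mono) auto
  ultimately show False
    by simp
qed

lemma weighted_integral_between_l_u:
  assumes w: "bounded_weight w"
    and le: "\<And>s. s \<in> {0..1} \<Longrightarrow> indicator {u m<..} s \<le> w s \<and> w s \<le> indicator {l m..} s"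
  shows "weighted_integral (f m) w = upper_mass m (t_opt $ m)"
    and "weighted_integral (\<lambda>s. h s * f m s) w = weighted_integral (\<lambda>s. h s * f m s) (indicator {u m<..})"
proof -
  have "weighted_integral (f m) (indicator {u m<..}) = weighted_integral (f m) (indicator {l m..})"
    using upper_mass_l upper_mass_u weighted_integral_greaterThan[OF f_integrable]
    unfolding upper_mass_def by simp
  moreover have "0 \<le> h s \<and> h s \<le> h 1" if "s \<in> {0..1}" for s
    using that h_nonneg h_le[of s 1] by auto
  ultimately have "weighted_integral (f m) w = weighted_integral (f m) (indicator {u m<..})"
    "weighted_integral (\<lambda>s. h s * f m s) w = weighted_integral (\<lambda>s. h s * f m s) (indicator {u m<..})"
    using weighted_integral_sandwich[OF f_integrable[of m] f_nonneg[of _ m] h_bounded_weight,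
        of "h 1" "indicator {u m<..}" w "indicator {l m..}"] w le
    by simp_all
  then show "weighted_integral (f m) w = upper_mass m (t_opt $ m)"
      "weighted_integral (\<lambda>s. h s * f m s) w = weighted_integral (\<lambda>s. h s * f m s) (indicator {u m<..})"
    using upper_mass_u weighted_integral_greaterThan[OF f_integrable] unfolding upper_mass_def by simp_all
qed

lemma upper_score_between_l_u:
  assumes "t \<in> {l m..u m}"
  shows "upper_score m t = weighted_integral (\<lambda>s. h s * f m s) (indicator {u m<..})"
  unfolding upper_score_def
  by (rule weighted_integral_between_l_u(2)) (use assms in \<open>auto split: split_indicator\<close>)

section \<open>The cutoff allocation\<close>

text \<open>If no group has \<open>u m < 1\<close>, then \<open>Min {}\<close> below is unspecified, which is harmless since
  \<open>cutoff_le\<close> is then vacuous.\<close>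

definition cutoff :: real where
  "cutoff = Max (insert (Min {v m (u m) | m. u m < 1}) {v m (l m) | m. 0 < l m})"

lemma cutoff_ge: "0 < l m \<Longrightarrow> v m (l m) \<le> cutoff"
  unfolding cutoff_def by (intro Max_ge) auto

lemma cutoff_le: "u m < 1 \<Longrightarrow> cutoff \<le> v m (u m)"
  unfolding cutoff_def using v_l_le_v_u by (subst Max_le_iff) (auto intro: Min_le)

definition mu :: "'m \<Rightarrow> real \<Rightarrow> bool" where
  "mu m s \<longleftrightarrow> cutoff < v m s"

lemma mu_measurable: "{s \<in> {0..1}. mu m s} \<in> sets lebesgue"
proof -
  have "v m \<in> borel_measurable (lebesgue_on {0..1})"
    by (rule continuous_imp_measurable_on_sets_lebesgue[OF continuous_on_v]) auto
  then have "{s \<in> space (lebesgue_on {0..1}). cutoff < v m s} \<in> sets (lebesgue_on {0..1})"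
    by measurable
  then show ?thesis
    by (simp add: sets_restrict_space_iff mu_def)
qed

lemma mu_between_l_u:
  assumes "s \<in> {0..1}"
  shows "indicator {u m<..} s \<le> (indicator {s \<in> {0..1}. mu m s} s :: real) \<and>
    (indicator {s \<in> {0..1}. mu m s} s :: real) \<le> indicator {l m..} s"
proof -
  have "mu m s" if "u m < s"
  proof -
    have "cutoff \<le> v m (u m)"
      using that assms by (intro cutoff_le) auto
    also have "v m (u m) < v m s"
      unfolding v_def using h_less[OF u_in_unit assms that] by simp
    finally show ?thesis
      unfolding mu_def .
  qed
  moreover have "l m \<le> s" if "mu m s"
  proof (rule ccontr)
    assume "\<not> l m \<le> s"
    then have "v m s \<le> v m (l m)" "0 < l m"
      using v_le[OF assms l_in_unit] assms by auto
    then show False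
      using cutoff_ge[of m] that unfolding mu_def by simp
  qed
  ultimately show ?thesis
    using assms by (auto split: split_indicator)
qed

lemma outcome_mu: "outcome h f (\<lambda>m. indicator {s \<in> {0..1}. mu m s}) = p_opt"
proof -
  have "weighted_integral (f m) (indicator {s \<in> {0..1}. mu m s}) = upper_mass m (t_opt $ m)"
    "weighted_integral (\<lambda>s. h s * f m s) (indicator {s \<in> {0..1}. mu m s}) = upper_score m (t_opt $ m)"
    for m
    using weighted_integral_between_l_u[OF bounded_weight_indicator[OF mu_measurable] mu_between_l_u]
      upper_score_between_l_u l_le_t_opt t_opt_le_u by simp_all
  then show ?thesis
    unfolding outcome_def p_opt_eq by simp
qed

text \<open>The description in \<open>sbar_top\<close> is unique: a threshold with the mass of \<open>t_opt $ m\<close> lies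
  in \<open>[l m, u m]\<close>, where \<open>upper_score m\<close> is constant.\<close>

lemma sbar_top_x_opt: "sbar_top h f (snd p_opt) = fst p_opt"
proof -
  have mass: "(LINT s:{t..1}|lebesgue. f m s) = upper_mass m t"
    and score: "(LINT s:{t..1}|lebesgue. h s * f m s) = upper_score m t" if "t \<in> {0..1}" for t m
    using weighted_integral_atLeast(1)[OF f_integrable that] weighted_integral_atLeast(1)[OF hf_integrable that]
    unfolding upper_mass_def upper_score_def by simp_all
  have "(THE x. \<exists>t\<in>{0..1}. (LINT s:{t..1}|lebesgue. f m s) = upper_mass m (t_opt $ m) \<and>
      x = (LINT s:{t..1}|lebesgue. h s * f m s)) = upper_score m (t_opt $ m)" for m
  proof (rule the_equality)
    show "\<exists>t\<in>{0..1}. (LINT s:{t..1}|lebesgue. f m s) = upper_mass m (t_opt $ m) \<and>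
        upper_score m (t_opt $ m) = (LINT s:{t..1}|lebesgue. h s * f m s)"
      using t_opt_in_unit[of m] mass[of "t_opt $ m" m] score[of "t_opt $ m" m] by (intro bexI) auto
  next
    fix x assume "\<exists>t\<in>{0..1}. (LINT s:{t..1}|lebesgue. f m s) = upper_mass m (t_opt $ m) \<and>
        x = (LINT s:{t..1}|lebesgue. h s * f m s)"
    then obtain t where t: "t \<in> {0..1}" "upper_mass m t = upper_mass m (t_opt $ m)" "x = upper_score m t"
      using mass score by metis
    then have "t \<in> {l m..u m}"
      using upper_mass_eq_t_opt_iff by blast
    then show "x = upper_score m (t_opt $ m)"
      using t(3) upper_score_between_l_u l_le_t_opt[of m] t_opt_le_u[of m] by simp
  qed
  then show ?thesis
    unfolding sbar_top_def p_opt_eq by simp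
qed

lemma mu_first_best: "first_best \<xi> h q f mu"
  unfolding first_best_def
proof (intro conjI allI impI)
  show "allocation q f mu"
    using mu_measurable outcome_mu budget_binding
    unfolding allocation_def outcome_eq_sbar_xalloc p_opt_eq by auto
  fix \<mu>' assume "allocation q f \<mu>'"
  then show "\<xi> (sbar h f \<mu>', xalloc f \<mu>') \<le> \<xi> (sbar h f mu, xalloc f mu)"
    using fractional_outcome_le_p_opt[OF fractional_allocation_of_allocation] outcome_mu
    unfolding outcome_eq_sbar_xalloc by metis
qed

lemma APM_mu: "APM g h \<xi> f m (xalloc f mu) s = g (v m s)"
proof -
  have "(sbar_top h f (xalloc f mu), xalloc f mu) = p_opt"
    using outcome_mu sbar_top_x_opt unfolding outcome_eq_sbar_xalloc by (metis prod.collapse snd_conv)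
  then show ?thesis
    unfolding APM_def v_def c_def by simp
qed

lemma mu_implements:
  assumes "strict_mono g"
  shows "implements q (APM g h \<xi> f) f mu"
  unfolding implements_def APM_mu
proof (intro conjI allI impI)
  show "(\<Sum>m\<in>UNIV. xalloc f mu $ m) = q"
    using outcome_mu budget_binding unfolding outcome_eq_sbar_xalloc p_opt_eq by auto
  fix m s
  show "mu m s \<longleftrightarrow> (\<forall>m' s'. s' \<in> {0..1} \<and> \<not> mu m' s' \<longrightarrow> g (v m' s') < g (v m s))"
    if "s \<in> {0..1}"
    using that assms unfolding mu_def strict_mono_def by force
qed

end

theorem proposition9:
  fixes \<xi> :: "real \<times> (real^'m::finite) \<Rightarrow> real" and h g :: "real \<Rightarrow> real" and q :: real
  assumes "0 < q" "q < 1"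
    and "continuous_on {0..1} h" "strict_mono_on {0..1} h" "\<forall>s\<in>{0..1}. 0 \<le> h s"
    and "strict_mono g" "\<forall>s\<in>{0..1}. g (h s) = s"
    and "\<forall>a a' x x'. a \<le> a' \<and> (\<forall>m. x $ m \<le> x' $ m) \<longrightarrow> \<xi> (a, x) \<le> \<xi> (a', x')"
    and "\<forall>p. \<xi> differentiable (at p)"
    and "concave_on UNIV \<xi>"
    and "\<forall>p. partial_s \<xi> p > 0"
  shows "\<forall>f. is_state f \<longrightarrow>
           (\<exists>\<mu>. first_best \<xi> h q f \<mu> \<and> implements q (APM g h \<xi> f) f \<mu>)"
proof (intro allI impI)
  fix f :: "'m \<Rightarrow> real \<Rightarrow> real"
  assume "is_state f"
  then interpret continuum_state \<xi> h q f
    using assms by unfold_locales auto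
  show "\<exists>\<mu>. first_best \<xi> h q f \<mu> \<and> implements q (APM g h \<xi> f) f \<mu>"
    using mu_first_best mu_implements[OF \<open>strict_mono g\<close>] by blast
qed

end
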